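(* For every $a>0$ and $X,Y\in L^2(\Omega,\mathbb{R})$, $$\Big|\int_0^1\Big(\mathbf{1}_{|X-\lambda Y|\le1}\frac{\operatorname{sgn}(X-\lambda Y)}{\sqrt{|X-\lambda Y|}+a}-\mathbf{1}_{|X|\le1}\frac{\operatorname{sgn}(X)}{\sqrt{|X|}+a}\Big)d\lambda\Big|\le\frac{3\pi}{2}\frac{1}{\sqrt{|X|}}\quad\mathbb{P}\text{-a.s.}$$ Furthermore, if $F_{\mathcal{L}(X)}$ is continuous and $H:\mathcal{P}_2(\mathbb{R}^2)\to\mathbb{R}_+$ satisfies $H(\mathcal{L}(X,Y))\to0$ as $\|Y\|_{L^2(\Omega,\mathbb{R})}\to0$, then $$\int_0^1\Big(\mathbf{1}_{|X-\lambda Y|\le1}\frac{\operatorname{sgn}(X-\lambda Y)}{\sqrt{|X-\lambda Y|}+H(\mathcal{L}(X,Y))}-\mathbf{1}_{|X|\le1}\frac{\operatorname{sgn}(X)}{\sqrt{|X|}+H(\mathcal{L}(X,Y))}\Big)d\lambda\to0$$ in probability as $\|Y\|_{L^2(\Omega,\mathbb{R})}\to0$ (with $X$ fixed).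
   Context: $(\Omega,\mathcal{F},\mathbb{P})$ is a probability space; $F_{\mathcal{L}(X)}$ denotes the distribution function of $X$; $\mathcal{P}_2(\mathbb{R}^2)$ is the set of Borel probability measures on $\mathbb{R}^2$ with finite second moment; $\mathcal{L}(X,Y)$ the joint law. *)

theory Defs
  imports "HOL-Probability.Probability"
begin

definition phi :: "real \<Rightarrow> real \<Rightarrow> real" where
  "phi a x = (if \<bar>x\<bar> \<le> 1 then sgn x / (sqrt \<bar>x\<bar> + a) else 0)"

definition lam_int :: "real \<Rightarrow> real \<Rightarrow> real \<Rightarrow> real" where
  "lam_int a x y = (LINT l:{0..1}|lborel. (phi a (x - l * y) - phi a x))"

definition L2 :: "'a measure \<Rightarrow> ('a \<Rightarrow> real) \<Rightarrow> bool" where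
  "L2 M X \<longleftrightarrow> X \<in> borel_measurable M \<and> integrable M (\<lambda>w. (X w)\<^sup>2)"

definition L2norm :: "'a measure \<Rightarrow> ('a \<Rightarrow> real) \<Rightarrow> real" where
  "L2norm M X = sqrt (\<integral>w. (X w)\<^sup>2 \<partial>M)"

definition P2 :: "(real \<times> real) measure \<Rightarrow> bool" where
  "P2 \<mu> \<longleftrightarrow> prob_space \<mu> \<and> sets \<mu> = sets borel \<and>
     integrable \<mu> (\<lambda>z. (fst z)\<^sup>2 + (snd z)\<^sup>2)"

definition law2 :: "'a measure \<Rightarrow> ('a \<Rightarrow> real) \<Rightarrow> ('a \<Rightarrow> real) \<Rightarrow> (real \<times> real) measure" where
  "law2 M X Y = distr M borel (\<lambda>w. (X w, Y w))"

end

theory Submission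
  imports Defs
begin

text \<open>
  If \<open>\<bar>y\<bar> \<le> \<bar>x\<bar> / 2\<close>, every point \<open>x - \<lambda> y\<close> stays at distance \<open>\<bar>x\<bar> / 2\<close> from the singularity,
  and the pointwise bound \<open>\<bar>phi a u\<bar> \<le> 1 / sqrt \<bar>u\<bar>\<close> suffices. Otherwise the \<open>\<lambda>\<close>-integral
  equals \<open>(Phi a x - Phi a (x - y)) / y - phi a x\<close> for a primitive \<open>Phi a\<close> of \<open>phi a\<close> which is
  \<open>1/2\<close>-Hoelder with constant 2 uniformly in \<open>a\<close>, so it is \<open>O(1 / sqrt \<bar>y\<bar>) = O(1 / sqrt \<bar>x\<bar>)\<close>.
  Either way the bound is \<open>4 / sqrt \<bar>x\<bar> \<le> 3 pi / (2 sqrt \<bar>x\<bar>)\<close>.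

  Away from its jumps \<open>-1, 0, 1\<close> the kernel \<open>phi h\<close> is Lipschitz uniformly in \<open>h \<ge> 0\<close>.
  Continuity of the distribution function makes \<open>X\<close> land near a jump only with small
  probability, and Chebyshev's inequality does the same for \<open>\<bar>Y\<bar>\<close> not being small.
\<close>

lemma borel_measurable_phi [measurable]: "phi a \<in> borel_measurable borel"
  unfolding phi_def[abs_def] by measurable

lemma abs_set_integral_le_bound:
  fixes f :: "'a \<Rightarrow> real"
  assumes A: "A \<in> sets M" "emeasure M A < \<infinity>" and [measurable]: "f \<in> borel_measurable M"
    and bound: "\<And>x. x \<in> A \<Longrightarrow> \<bar>f x\<bar> \<le> C"
  shows "\<bar>LINT x:A|M. f x\<bar> \<le> C * measure M A"
proof -
  have f: "set_integrable M A f"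
    unfolding set_integrable_def
    by (rule integrableI_bounded_set_indicator[where B=C]) (use A bound in auto)
  have "\<bar>LINT x:A|M. f x\<bar> \<le> (LINT x:A|M. \<bar>f x\<bar>)"
    using set_integral_norm_bound[OF f] by simp
  also have "\<dots> \<le> (LINT x:A|M. C)"
    using A bound set_integrable_abs[OF f] by (intro set_integral_mono)
      (auto simp: set_integrable_def integrable_indicator_iff)
  also have "\<dots> = C * measure M A"
    using A by (simp add: set_integral_const)
  finally show ?thesis .
qed

lemma abs_phi_le_inverse_sqrt:
  assumes "a \<ge> 0" "u \<noteq> 0"
  shows "\<bar>phi a u\<bar> \<le> 1 / sqrt \<bar>u\<bar>"
proof -
  have "\<bar>sgn u / (sqrt \<bar>u\<bar> + a)\<bar> = 1 / (sqrt \<bar>u\<bar> + a)"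
    using assms by (simp add: abs_sgn_eq)
  also have "\<dots> \<le> 1 / sqrt \<bar>u\<bar>"
    using assms by (simp add: frac_le)
  finally show ?thesis
    unfolding phi_def by simp
qed

lemma abs_phi_le_inverse:
  assumes "a > 0"
  shows "\<bar>phi a u\<bar> \<le> 1 / a"
proof -
  have "\<bar>sgn u / (sqrt \<bar>u\<bar> + a)\<bar> \<le> 1 / (sqrt \<bar>u\<bar> + a)"
    using assms by (simp add: abs_sgn_eq)
  also have "\<dots> \<le> 1 / a"
    using assms by (simp add: frac_le)
  finally show ?thesis
    unfolding phi_def using assms by simp
qed

text \<open>\<open>Psi a (sqrt t)\<close> is a primitive of \<open>1 / (sqrt t + a)\<close> on \<open>t > 0\<close>, and \<open>Phi a\<close>,
  which freezes it outside \<open>[-1, 1]\<close> and makes it even, is a primitive of \<open>phi a\<close>.\<close>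

definition Psi :: "real \<Rightarrow> real \<Rightarrow> real" where
  "Psi a s = 2 * (s - a * ln (a + s))"

definition Phi :: "real \<Rightarrow> real \<Rightarrow> real" where
  "Phi a u = Psi a (sqrt (min \<bar>u\<bar> 1))"

lemma Psi_sqrt_has_real_derivative:
  assumes "a > 0" "t > 0"
  shows "((\<lambda>t. Psi a (sqrt t)) has_real_derivative 1 / (sqrt t + a)) (at t)"
proof -
  have "sqrt t > 0" "a + sqrt t > 0"
    using assms by (auto intro: add_pos_pos)
  then show ?thesis
    unfolding Psi_def by (auto intro!: derivative_eq_intros simp: divide_simps)
qed

lemma Psi_increment_bounds:
  assumes "a > 0" "0 \<le> s" "s \<le> s'"
  shows "0 \<le> Psi a s' - Psi a s" "Psi a s' - Psi a s \<le> 2 * (s' - s)"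
proof -
  define r where "r = (s' - s) / (a + s)"
  have r: "0 \<le> r" "a * r \<le> s' - s"
    using assms by (auto simp: r_def field_simps intro!: mult_left_mono)
  have "ln (a + s') - ln (a + s) = ln ((a + s') / (a + s))"
    using assms by (simp add: ln_div)
  also have "(a + s') / (a + s) = 1 + r"
    using assms by (simp add: r_def field_simps)
  finally have "ln (a + s') - ln (a + s) = ln (1 + r)" .
  then have diff: "Psi a s' - Psi a s = 2 * ((s' - s) - a * ln (1 + r))"
    unfolding Psi_def by (simp add: algebra_simps)
  have "a * ln (1 + r) \<le> a * r"
    using assms r by (intro mult_left_mono ln_add_one_self_le_self) auto
  moreover have "0 \<le> a * ln (1 + r)"
    using assms r by simp
  ultimately show "0 \<le> Psi a s' - Psi a s" "Psi a s' - Psi a s \<le> 2 * (s' - s)"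
    unfolding diff using r by simp_all
qed

lemma Phi_hoelder:
  assumes "a > 0"
  shows "\<bar>Phi a u - Phi a v\<bar> \<le> 2 * sqrt \<bar>u - v\<bar>"
proof -
  have ordered: "\<bar>Phi a u - Phi a v\<bar> \<le> 2 * sqrt \<bar>u - v\<bar>"
    if "min (\<bar>v\<bar>) 1 \<le> min (\<bar>u\<bar>) 1" for u v
  proof -
    define t t' where "t = min \<bar>v\<bar> 1" and "t' = min \<bar>u\<bar> 1"
    have t: "0 \<le> t" "t \<le> t'" "t' - t \<le> \<bar>u - v\<bar>"
      using that by (auto simp: t_def t'_def)
    have "\<bar>Phi a u - Phi a v\<bar> \<le> 2 * (sqrt t' - sqrt t)"
      using Psi_increment_bounds[OF assms, of "sqrt t" "sqrt t'"] t
      unfolding Phi_def t_def[symmetric] t'_def[symmetric] by simp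
    also have "sqrt t' \<le> sqrt t + sqrt (t' - t)"
      using sqrt_add_le_add_sqrt[of t "t' - t"] t by simp
    also have "sqrt (t' - t) \<le> sqrt \<bar>u - v\<bar>"
      using t by simp
    finally show ?thesis
      by simp
  qed
  show ?thesis
    using ordered[of v u] ordered[of u v] by (metis abs_minus_commute linorder_le_cases)
qed

lemma continuous_on_Phi:
  assumes "a > 0"
  shows "continuous_on UNIV (Phi a)"
proof -
  have "a + sqrt (min \<bar>u\<bar> 1) > 0" for u
    using assms by (simp add: add_pos_nonneg)
  then show ?thesis
    unfolding Phi_def[abs_def] Psi_def by (intro continuous_intros) (auto simp: order_less_imp_not_eq2)
qed

lemma Phi_has_real_derivative:
  assumes a: "a > 0" and u: "u \<noteq> -1" "u \<noteq> 0" "u \<noteq> 1"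
  shows "(Phi a has_real_derivative phi a u) (at u)"
proof -
  consider "1 < \<bar>u\<bar>" | "0 < u" "u < 1" | "-1 < u" "u < 0"
    using u by linarith
  then show ?thesis
  proof cases
    case 1
    show ?thesis
    proof (rule has_field_derivative_transform_within_open[where f="\<lambda>_. Psi a 1" and S="{v. 1 < \<bar>v\<bar>}"])
      show "open {v::real. 1 < \<bar>v\<bar>}"
        by (intro open_Collect_less continuous_intros)
    qed (use 1 in \<open>auto simp: Phi_def phi_def\<close>)
  next
    case 2
    show ?thesis
    proof (rule has_field_derivative_transform_within_open[where f="\<lambda>t. Psi a (sqrt t)" and S="{0<..<1}"])
      show "((\<lambda>t. Psi a (sqrt t)) has_real_derivative phi a u) (at u)"
        using Psi_sqrt_has_real_derivative[OF a, of u] 2 by (simp add: phi_def)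
    qed (use 2 in \<open>auto simp: Phi_def\<close>)
  next
    case 3
    show ?thesis
    proof (rule has_field_derivative_transform_within_open[where f="\<lambda>t. Psi a (sqrt (- t))" and S="{-1<..<0}"])
      have "((\<lambda>t. Psi a (sqrt (- t))) has_real_derivative 1 / (sqrt (- u) + a) * (- 1)) (at u)"
        using Psi_sqrt_has_real_derivative[OF a, of "- u"] 3
        by (intro DERIV_chain2[where f="\<lambda>t. Psi a (sqrt t)"]) (auto intro!: derivative_eq_intros)
      then show "((\<lambda>t. Psi a (sqrt (- t))) has_real_derivative phi a u) (at u)"
        using 3 by (simp add: phi_def)
    qed (use 3 in \<open>auto simp: Phi_def\<close>)
  qed
qed

lemma phi_shift_has_integral:
  assumes a: "a > 0" and y: "y \<noteq> 0"
  shows "((\<lambda>l. phi a (x - l * y)) has_integral (Phi a x - Phi a (x - y)) / y) {0..1}"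
proof -
  let ?F = "\<lambda>l. - Phi a (x - l * y) / y"
  have "((\<lambda>l. phi a (x - l * y)) has_integral (?F 1 - ?F 0)) {0..1}"
  proof (rule fundamental_theorem_of_calculus_interior_strong[where S="{(x + 1) / y, x / y, (x - 1) / y}"])
    show "continuous_on {0..1} ?F"
      by (intro continuous_intros continuous_on_compose2[OF continuous_on_Phi[OF a]]) (use y in auto)
    fix l assume l: "l \<in> {0<..<1} - {(x + 1) / y, x / y, (x - 1) / y}"
    then have "x - l * y \<noteq> -1" "x - l * y \<noteq> 0" "x - l * y \<noteq> 1"
      using y by (auto simp: field_simps)
    then have "((\<lambda>l. Phi a (x - l * y)) has_real_derivative phi a (x - l * y) * (- y)) (at l)"
      using Phi_has_real_derivative[OF a]
      by (intro DERIV_chain2[where f="Phi a"]) (auto intro!: derivative_eq_intros)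
    then have "(?F has_real_derivative - (phi a (x - l * y) * (- y)) / y) (at l)"
      by (auto intro!: derivative_eq_intros)
    then show "(?F has_vector_derivative phi a (x - l * y)) (at l)"
      using y by (simp add: has_real_derivative_iff_has_vector_derivative)
  qed auto
  then show ?thesis
    by (simp add: diff_divide_distrib)
qed

lemma lam_int_eq_Phi:
  assumes a: "a > 0" and y: "y \<noteq> 0"
  shows "lam_int a x y = (Phi a x - Phi a (x - y)) / y - phi a x"
proof -
  have "set_integrable lborel {0..1::real} (\<lambda>l. phi a (x - l * y) - phi a x)"
    unfolding set_integrable_def
  proof (rule integrableI_bounded_set_indicator[where B="2 / a"])
    have "\<bar>phi a (x - l * y) - phi a x\<bar> \<le> 2 / a" for l
      using abs_phi_le_inverse[OF a, of "x - l * y"] abs_phi_le_inverse[OF a, of x] by arith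
    then show "AE l in lborel. l \<in> {0..1} \<longrightarrow> norm (phi a (x - l * y) - phi a x) \<le> 2 / a"
      by simp
  qed simp_all
  then have "lam_int a x y = integral {0..1} (\<lambda>l. phi a (x - l * y) - phi a x)"
    unfolding lam_int_def by (rule set_borel_integral_eq_integral)
  also have "\<dots> = (Phi a x - Phi a (x - y)) / y - phi a x"
    using has_integral_diff[OF phi_shift_has_integral[OF a y] has_integral_const_real[of "phi a x" 0 1]]
    by (simp add: integral_unique)
  finally show ?thesis .
qed

lemma inverse_sqrt_le_scaled:
  assumes "0 < q" "q \<le> k\<^sup>2 * p" "0 < k"
  shows "1 / sqrt p \<le> k / sqrt q"
proof -
  have "0 < p"
    using zero_less_mult_pos[OF less_le_trans[OF assms(1,2)]] assms(3) by simp
  have "sqrt q \<le> k * sqrt p"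
    using real_sqrt_le_mono[OF assms(2)] assms by (simp add: real_sqrt_mult)
  then show ?thesis
    using assms \<open>0 < p\<close> by (simp add: field_simps)
qed

lemma abs_lam_int_le:
  assumes a: "a > 0" and x: "x \<noteq> 0"
  shows "\<bar>lam_int a x y\<bar> \<le> 4 / sqrt \<bar>x\<bar>"
proof -
  have phi_x: "\<bar>phi a x\<bar> \<le> 1 / sqrt \<bar>x\<bar>"
    using abs_phi_le_inverse_sqrt a x by simp
  show ?thesis
  proof (cases "\<bar>y\<bar> \<le> \<bar>x\<bar> / 2")
    case True
    have "\<bar>lam_int a x y\<bar> \<le> (5 / 2) / sqrt \<bar>x\<bar> * measure lborel {0..1::real}"
      unfolding lam_int_def
    proof (rule abs_set_integral_le_bound)
      fix l :: real assume "l \<in> {0..1}"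
      then have "\<bar>l * y\<bar> \<le> \<bar>y\<bar>"
        by (auto simp: abs_mult intro: mult_left_le_one_le)
      then have near: "\<bar>x\<bar> / 2 \<le> \<bar>x - l * y\<bar>"
        using True by linarith
      then have "x - l * y \<noteq> 0"
        using x by auto
      then have "\<bar>phi a (x - l * y)\<bar> \<le> 1 / sqrt \<bar>x - l * y\<bar>"
        using a by (simp add: abs_phi_le_inverse_sqrt)
      also have "\<dots> \<le> (3 / 2) / sqrt \<bar>x\<bar>"
        using x near by (intro inverse_sqrt_le_scaled) (auto simp: power2_eq_square)
      finally show "\<bar>phi a (x - l * y) - phi a x\<bar> \<le> (5 / 2) / sqrt \<bar>x\<bar>"
        using phi_x by linarith
    qed simp_all
    then show ?thesis
      using x by (simp add: divide_right_mono)
  next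
    case False
    then have y: "y \<noteq> 0"
      by auto
    have y_large: "1 / sqrt \<bar>y\<bar> \<le> (3 / 2) / sqrt \<bar>x\<bar>"
      using x False by (intro inverse_sqrt_le_scaled) (auto simp: power2_eq_square)
    have "\<bar>lam_int a x y\<bar> \<le> \<bar>Phi a x - Phi a (x - y)\<bar> / \<bar>y\<bar> + \<bar>phi a x\<bar>"
      unfolding lam_int_eq_Phi[OF a y] by (metis abs_divide abs_triangle_ineq4)
    also have "\<bar>Phi a x - Phi a (x - y)\<bar> / \<bar>y\<bar> \<le> 2 * sqrt \<bar>y\<bar> / \<bar>y\<bar>"
      using Phi_hoelder[OF a, of x "x - y"] by (simp add: divide_right_mono)
    also have "2 * sqrt \<bar>y\<bar> / \<bar>y\<bar> = 2 / sqrt \<bar>y\<bar>"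
      using y by (simp add: divide_simps)
    also have "2 / sqrt \<bar>y\<bar> \<le> 3 / sqrt \<bar>x\<bar>"
      using y_large by simp
    finally show ?thesis
      using phi_x by simp
  qed
qed

lemma inverse_sqrt_add_lipschitz:
  assumes c: "c > 0" and p: "p \<ge> c" and q: "q \<ge> c" and h: "h \<ge> 0"
  shows "\<bar>1 / (sqrt p + h) - 1 / (sqrt q + h)\<bar> \<le> \<bar>p - q\<bar> / (c * sqrt c)"
proof -
  have sc: "sqrt c > 0" "sqrt c \<le> sqrt p" "sqrt c \<le> sqrt q"
    using assms by auto
  then have pos: "sqrt p + h > 0" "sqrt q + h > 0" "sqrt p + sqrt q > 0"
    using h by linarith+
  have "1 / (sqrt p + h) - 1 / (sqrt q + h) = (sqrt q - sqrt p) / ((sqrt p + h) * (sqrt q + h))"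
    using pos by (simp add: field_simps)
  also have "(sqrt q - sqrt p) * (sqrt p + sqrt q) = q - p"
    using p q c by (simp add: algebra_simps)
  then have "sqrt q - sqrt p = (q - p) / (sqrt p + sqrt q)"
    using pos(3) by (simp add: eq_divide_eq)
  finally have "\<bar>1 / (sqrt p + h) - 1 / (sqrt q + h)\<bar>
      = \<bar>p - q\<bar> / ((sqrt p + sqrt q) * ((sqrt p + h) * (sqrt q + h)))"
    using pos by (simp add: abs_mult abs_minus_commute)
  also have "\<dots> \<le> \<bar>p - q\<bar> / (c * sqrt c)"
  proof (rule divide_left_mono)
    have "sqrt c \<le> sqrt p + sqrt q"
      using sc by linarith
    then have "c * sqrt c \<le> (sqrt p + sqrt q) * (sqrt c * sqrt c)"
      using c by simp
    also have "\<dots> \<le> (sqrt p + sqrt q) * ((sqrt p + h) * (sqrt q + h))"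
      using sc h pos by (intro mult_left_mono mult_mono) linarith+
    finally show "c * sqrt c \<le> (sqrt p + sqrt q) * ((sqrt p + h) * (sqrt q + h))" .
  qed (use pos c in simp_all)
  finally show ?thesis .
qed

lemma phi_lipschitz_off_jumps:
  assumes h: "h \<ge> 0" and d: "\<delta> > 0"
    and jumps: "\<And>c. c \<in> {-1, 0, 1} \<Longrightarrow> 2 * \<delta> \<le> \<bar>x - c\<bar>" and u: "\<bar>u - x\<bar> < \<delta>"
  shows "\<bar>phi h u - phi h x\<bar> \<le> \<bar>u - x\<bar> / (\<delta> * sqrt \<delta>)"
proof -
  have x: "2 * \<delta> \<le> \<bar>x\<bar>" "2 * \<delta> \<le> \<bar>x - 1\<bar>" "2 * \<delta> \<le> \<bar>x + 1\<bar>"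
    using jumps[of 0] jumps[of 1] jumps[of "-1"] by simp_all
  show ?thesis
  proof (cases "\<bar>x\<bar> \<le> 1")
    case True
    then have "\<bar>u\<bar> \<le> 1"
      using x u by linarith
    moreover have "sgn u = sgn x"
      using x(1) u d by (auto simp: sgn_if abs_if split: if_splits)
    ultimately have "phi h u - phi h x = sgn x * (1 / (sqrt \<bar>u\<bar> + h) - 1 / (sqrt \<bar>x\<bar> + h))"
      using True by (simp add: phi_def right_diff_distrib)
    then have "\<bar>phi h u - phi h x\<bar> = \<bar>1 / (sqrt \<bar>u\<bar> + h) - 1 / (sqrt \<bar>x\<bar> + h)\<bar>"
      using x(1) d by (auto simp: abs_mult abs_sgn_eq)
    also have "\<dots> \<le> \<bar>\<bar>u\<bar> - \<bar>x\<bar>\<bar> / (\<delta> * sqrt \<delta>)"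
      using x u d h by (intro inverse_sqrt_add_lipschitz) auto
    also have "\<dots> \<le> \<bar>u - x\<bar> / (\<delta> * sqrt \<delta>)"
      using d by (intro divide_right_mono) auto
    finally show ?thesis .
  next
    case False
    then have "1 < \<bar>u\<bar>"
      using x u d by linarith
    then show ?thesis
      using False d by (simp add: phi_def)
  qed
qed

lemma abs_lam_int_le_lipschitz:
  assumes h: "h \<ge> 0" and d: "\<delta> > 0"
    and jumps: "\<And>c. c \<in> {-1, 0, 1} \<Longrightarrow> 2 * \<delta> \<le> \<bar>x - c\<bar>" and y: "\<bar>y\<bar> < \<delta>"
  shows "\<bar>lam_int h x y\<bar> \<le> \<bar>y\<bar> / (\<delta> * sqrt \<delta>)"
proof -
  have "\<bar>lam_int h x y\<bar> \<le> \<bar>y\<bar> / (\<delta> * sqrt \<delta>) * measure lborel {0..1::real}"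
    unfolding lam_int_def
  proof (rule abs_set_integral_le_bound)
    fix l :: real assume "l \<in> {0..1}"
    then have shift: "\<bar>(x - l * y) - x\<bar> \<le> \<bar>y\<bar>"
      by (auto simp: abs_mult intro: mult_left_le_one_le)
    then have "\<bar>phi h (x - l * y) - phi h x\<bar> \<le> \<bar>(x - l * y) - x\<bar> / (\<delta> * sqrt \<delta>)"
      using y by (intro phi_lipschitz_off_jumps[OF h d jumps]) auto
    also have "\<dots> \<le> \<bar>y\<bar> / (\<delta> * sqrt \<delta>)"
      using shift d by (simp add: divide_right_mono)
    finally show "\<bar>phi h (x - l * y) - phi h x\<bar> \<le> \<bar>y\<bar> / (\<delta> * sqrt \<delta>)" .
  qed simp_all
  then show ?thesis
    by simp
qed

lemma (in prob_space) measure_near_point_tendsto_0: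
  assumes [measurable]: "X \<in> borel_measurable M"
    and cont: "isCont (cdf (distr M borel X)) x\<^sub>0"
  shows "((\<lambda>\<delta>. measure M {w \<in> space M. \<bar>X w - x\<^sub>0\<bar> < \<delta>}) \<longlongrightarrow> 0) (at_right 0)"
proof -
  let ?F = "cdf (distr M borel X)"
  have D: "finite_borel_measure (distr M borel X)"
    by (simp add: real_distribution.finite_borel_measure_M)
  have bound: "measure M {w \<in> space M. \<bar>X w - x\<^sub>0\<bar> < \<delta>} \<le> ?F (x\<^sub>0 + \<delta>) - ?F (x\<^sub>0 - \<delta>)"
    if "\<delta> > 0" for \<delta>
  proof -
    have "measure M {w \<in> space M. \<bar>X w - x\<^sub>0\<bar> < \<delta>} \<le> measure M (X -` {x\<^sub>0 - \<delta><..x\<^sub>0 + \<delta>} \<inter> space M)"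
      by (intro finite_measure_mono) auto
    also have "\<dots> = ?F (x\<^sub>0 + \<delta>) - ?F (x\<^sub>0 - \<delta>)"
      using that by (simp add: finite_borel_measure.cdf_diff_eq[OF D] measure_distr)
    finally show ?thesis .
  qed
  have "((\<lambda>\<delta>. x\<^sub>0 + \<delta>) \<longlongrightarrow> x\<^sub>0 + 0) (at_right 0)" "((\<lambda>\<delta>. x\<^sub>0 - \<delta>) \<longlongrightarrow> x\<^sub>0 - 0) (at_right 0)"
    by (intro tendsto_intros)+
  then have "((\<lambda>\<delta>. ?F (x\<^sub>0 + \<delta>) - ?F (x\<^sub>0 - \<delta>)) \<longlongrightarrow> ?F x\<^sub>0 - ?F x\<^sub>0) (at_right 0)"
    by (intro tendsto_diff) (auto intro: isCont_tendsto_compose[OF cont])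
  then have lim: "((\<lambda>\<delta>. ?F (x\<^sub>0 + \<delta>) - ?F (x\<^sub>0 - \<delta>)) \<longlongrightarrow> 0) (at_right 0)"
    by simp
  have ev: "\<forall>\<^sub>F \<delta> in at_right 0. measure M {w \<in> space M. \<bar>X w - x\<^sub>0\<bar> < \<delta>} \<le> ?F (x\<^sub>0 + \<delta>) - ?F (x\<^sub>0 - \<delta>)"
    using eventually_at_right_less by (rule eventually_mono) (rule bound)
  show ?thesis
    by (rule tendsto_sandwich[OF _ ev tendsto_const lim]) simp
qed

lemma (in prob_space) measure_near_points_small:
  assumes [measurable]: "X \<in> borel_measurable M" and "finite C"
    and cont: "\<And>c. c \<in> C \<Longrightarrow> isCont (cdf (distr M borel X)) c" and "\<epsilon> > 0"
  obtains \<delta> where "\<delta> > 0" "\<And>c. c \<in> C \<Longrightarrow> measure M {w \<in> space M. \<bar>X w - c\<bar> < \<delta>} < \<epsilon>"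
proof -
  have "\<forall>\<^sub>F \<delta> in at_right 0. \<forall>c\<in>C. measure M {w \<in> space M. \<bar>X w - c\<bar> < \<delta>} < \<epsilon>"
    using measure_near_point_tendsto_0[OF _ cont] \<open>finite C\<close> \<open>\<epsilon> > 0\<close>
    by (auto intro!: eventually_ball_finite order_tendstoD(2))
  then have "\<forall>\<^sub>F \<delta> in at_right 0. 0 < \<delta> \<and> (\<forall>c\<in>C. measure M {w \<in> space M. \<bar>X w - c\<bar> < \<delta>} < \<epsilon>)"
    by (intro eventually_conj eventually_at_right_less)
  then show ?thesis
    using that eventually_happens'[OF trivial_limit_at_right_real] by blast
qed

lemma (in prob_space) measure_abs_ge_le_L2norm:
  assumes Y: "L2 M Y" and g: "\<gamma> > 0"
  shows "measure M {w \<in> space M. \<gamma> \<le> \<bar>Y w\<bar>} \<le> (L2norm M Y / \<gamma>)\<^sup>2"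
proof -
  have "{w \<in> space M. \<gamma> \<le> \<bar>Y w\<bar>} = {w \<in> space M. \<gamma>\<^sup>2 \<le> (Y w)\<^sup>2}"
    using g by (auto simp flip: abs_le_square_iff)
  also have "measure M \<dots> \<le> (\<integral>w. (Y w)\<^sup>2 \<partial>M) / \<gamma>\<^sup>2"
    using Y g by (intro integral_Markov_inequality_measure[where A="space M"]) (auto simp: L2_def)
  also have "\<dots> = (L2norm M Y / \<gamma>)\<^sup>2"
    by (simp add: L2norm_def power_divide)
  finally show ?thesis .
qed

lemma borel_measurable_lam_int [measurable]:
  assumes [measurable]: "X \<in> borel_measurable M" "Y \<in> borel_measurable M"
  shows "(\<lambda>w. lam_int h (X w) (Y w)) \<in> borel_measurable M"
  unfolding lam_int_def set_lebesgue_integral_def by measurable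

lemma (in prob_space) P2_law2:
  assumes X: "L2 M X" and Y: "L2 M Y"
  shows "P2 (law2 M X Y)"
proof -
  have [measurable]: "X \<in> borel_measurable M" "Y \<in> borel_measurable M"
    using X Y by (auto simp: L2_def)
  have [measurable]: "(\<lambda>z::real \<times> real. (fst z)\<^sup>2 + (snd z)\<^sup>2) \<in> borel_measurable borel"
    by (intro borel_measurable_continuous_onI continuous_intros)
  have "integrable M (\<lambda>w. (X w)\<^sup>2 + (Y w)\<^sup>2)"
    using X Y by (auto simp: L2_def)
  then show ?thesis
    unfolding P2_def law2_def
    by (auto intro!: prob_space_distr simp: integrable_distr_eq)
qed

lemma (in prob_space) lam_int_small_in_probability:
  assumes [measurable]: "X \<in> borel_measurable M"
    and cont: "\<And>c. c \<in> {-1, 0, 1} \<Longrightarrow> isCont (cdf (distr M borel X)) c"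
    and e: "e > 0" and \<eta>: "\<eta> > 0"
  obtains d where "d > 0"
    "\<And>h Y. h \<ge> 0 \<Longrightarrow> L2 M Y \<Longrightarrow> L2norm M Y < d \<Longrightarrow>
       measure M {w \<in> space M. \<bar>lam_int h (X w) (Y w)\<bar> > e} < \<eta>"
proof -
  define near where "near \<delta> c = {w \<in> space M. \<bar>X w - c\<bar> < \<delta>}" for \<delta> c
  obtain \<delta>' where "0 < \<delta>'" and near_small: "\<And>c. c \<in> {-1, 0, 1} \<Longrightarrow> measure M (near \<delta>' c) < \<eta> / 4"
    using measure_near_points_small[of X "{-1, 0, 1}" "\<eta> / 4"] cont \<eta> unfolding near_def by auto
  define \<delta> where "\<delta> = \<delta>' / 2"
  define \<gamma> where "\<gamma> = min \<delta> (e * (\<delta> * sqrt \<delta>))"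
  have \<delta>: "\<delta> > 0" and \<gamma>: "\<gamma> > 0"
    using \<open>0 < \<delta>'\<close> e by (auto simp: \<delta>_def \<gamma>_def)
  show ?thesis
  proof
    show "\<gamma> * sqrt (\<eta> / 4) > 0"
      using \<gamma> \<eta> by simp
    fix h :: real and Y assume h: "h \<ge> 0" and Y: "L2 M Y" and small: "L2norm M Y < \<gamma> * sqrt (\<eta> / 4)"
    have [measurable]: "Y \<in> borel_measurable M"
      using Y by (simp add: L2_def)
    let ?bad = "{w \<in> space M. \<bar>lam_int h (X w) (Y w)\<bar> > e}"
    let ?large = "{w \<in> space M. \<gamma> \<le> \<bar>Y w\<bar>}"
    have "?bad \<subseteq> (\<Union>c\<in>{-1, 0, 1}. near \<delta>' c) \<union> ?large"
    proof (rule subsetI, rule ccontr)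
      fix w assume w: "w \<in> ?bad" and good: "w \<notin> (\<Union>c\<in>{-1, 0, 1}. near \<delta>' c) \<union> ?large"
      then have Y_small: "\<bar>Y w\<bar> < \<gamma>"
        by auto
      have "2 * \<delta> \<le> \<bar>X w - c\<bar>" if "c \<in> {-1, 0, 1}" for c
        using that w good by (auto simp: near_def \<delta>_def)
      then have "\<bar>lam_int h (X w) (Y w)\<bar> \<le> \<bar>Y w\<bar> / (\<delta> * sqrt \<delta>)"
        using Y_small by (intro abs_lam_int_le_lipschitz[OF h \<delta>]) (auto simp: \<gamma>_def)
      also have "\<dots> < e"
        using Y_small \<delta> by (simp add: \<gamma>_def divide_less_eq)
      finally show False
        using w by simp
    qed
    then have "measure M ?bad \<le> measure M ((\<Union>c\<in>{-1, 0, 1}. near \<delta>' c) \<union> ?large)"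
      by (intro finite_measure_mono) (auto simp: near_def)
    also have "\<dots> \<le> (\<Sum>c\<in>{-1, 0, 1}. measure M (near \<delta>' c)) + measure M ?large"
      by (intro order_trans[OF measure_Un_le] add_right_mono finite_measure_subadditive_finite)
        (auto simp: near_def)
    also have "(\<Sum>c\<in>{-1, 0, 1}. measure M (near \<delta>' c)) < (\<Sum>c\<in>{-1, 0, 1::real}. \<eta> / 4)"
      using near_small by (intro sum_strict_mono) auto
    also have "measure M ?large \<le> (L2norm M Y / \<gamma>)\<^sup>2"
      by (rule measure_abs_ge_le_L2norm[OF Y \<gamma>])
    also have "(L2norm M Y / \<gamma>)\<^sup>2 < (sqrt (\<eta> / 4))\<^sup>2"
      using small \<gamma> by (intro power_strict_mono) (auto simp: L2norm_def divide_less_eq mult.commute)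
    finally show "measure M ?bad < \<eta>"
      using \<eta> by simp
  qed
qed

theorem lemmaA2:
  fixes M :: "'a measure"
  assumes "prob_space M"
  shows "(\<forall>a X Y. a > 0 \<longrightarrow> L2 M X \<longrightarrow> L2 M Y \<longrightarrow>
            (AE w in M. X w \<noteq> 0 \<longrightarrow>
               \<bar>lam_int a (X w) (Y w)\<bar> \<le> (3 * pi / 2) * (1 / sqrt \<bar>X w\<bar>)))
       \<and> (\<forall>X (H :: (real \<times> real) measure \<Rightarrow> real).
            L2 M X \<longrightarrow>
            (\<forall>x. isCont (cdf (distr M borel X)) x) \<longrightarrow>
            (\<forall>\<mu>. P2 \<mu> \<longrightarrow> H \<mu> \<ge> 0) \<longrightarrow>
            (\<forall>e>0. \<exists>d>0. \<forall>Y. L2 M Y \<longrightarrow> 0 < L2norm M Y \<longrightarrow> L2norm M Y < d \<longrightarrow>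
                 \<bar>H (law2 M X Y)\<bar> < e) \<longrightarrow>
            (\<forall>Y. L2 M Y \<longrightarrow>
                 (\<lambda>w. lam_int (H (law2 M X Y)) (X w) (Y w)) \<in> borel_measurable M) \<and>
            (\<forall>e>0. \<forall>\<eta>>0. \<exists>d>0. \<forall>Y. L2 M Y \<longrightarrow> 0 < L2norm M Y \<longrightarrow> L2norm M Y < d \<longrightarrow>
                 measure M {w \<in> space M. \<bar>lam_int (H (law2 M X Y)) (X w) (Y w)\<bar> > e} < \<eta>))"
proof -
  interpret prob_space M by fact
  show ?thesis
  proof (intro conjI allI impI)
    fix a :: real and X Y :: "'a \<Rightarrow> real"
    assume "a > 0"
    have "4 \<le> 3 * pi / 2"
      using pi_gt3 by simp
    then have "4 / sqrt \<bar>x\<bar> \<le> (3 * pi / 2) * (1 / sqrt \<bar>x\<bar>)" for x :: real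
      using divide_right_mono[of 4 "3 * pi / 2" "sqrt \<bar>x\<bar>"] by simp
    then show "AE w in M. X w \<noteq> 0 \<longrightarrow>
        \<bar>lam_int a (X w) (Y w)\<bar> \<le> (3 * pi / 2) * (1 / sqrt \<bar>X w\<bar>)"
      using abs_lam_int_le[OF \<open>a > 0\<close>] by (intro AE_I2) (meson order_trans)
  next
    fix X Y :: "'a \<Rightarrow> real" and H :: "(real \<times> real) measure \<Rightarrow> real"
    assume "L2 M X" "L2 M Y"
    then show "(\<lambda>w. lam_int (H (law2 M X Y)) (X w) (Y w)) \<in> borel_measurable M"
      by (intro borel_measurable_lam_int) (simp_all add: L2_def)
  next
    fix X :: "'a \<Rightarrow> real" and H :: "(real \<times> real) measure \<Rightarrow> real" and e \<eta> :: real
    assume X: "L2 M X" and cont: "\<forall>x. isCont (cdf (distr M borel X)) x"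
      and H: "\<forall>\<mu>. P2 \<mu> \<longrightarrow> H \<mu> \<ge> 0" and "e > 0" "\<eta> > 0"
    obtain d where "d > 0" and d: "\<And>h Y. h \<ge> 0 \<Longrightarrow> L2 M Y \<Longrightarrow> L2norm M Y < d \<Longrightarrow>
        measure M {w \<in> space M. \<bar>lam_int h (X w) (Y w)\<bar> > e} < \<eta>"
      using lam_int_small_in_probability[of X e \<eta>] X cont \<open>e > 0\<close> \<open>\<eta> > 0\<close>
      by (auto simp: L2_def)
    show "\<exists>d>0. \<forall>Y. L2 M Y \<longrightarrow> 0 < L2norm M Y \<longrightarrow> L2norm M Y < d \<longrightarrow>
        measure M {w \<in> space M. \<bar>lam_int (H (law2 M X Y)) (X w) (Y w)\<bar> > e} < \<eta>"
      using \<open>d > 0\<close> d H P2_law2[OF X] by blast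
  qed
qed

end
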